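(* Let $s\in\Sigma^*$ be non-empty with run-length encoding $s=a_1^{m_1}\cdots a_r^{m_r}$, let $h=\lceil r/2\rceil$, and let $\mathcal{K}(s)$ be the symbol string of the last token of $\mathcal{F}(s)$. Then $\mathcal{K}(s)=a_h^{m_h}$ if $r$ is odd and $\mathcal{K}(s)=a_h^{m_h}a_{h+1}^{m_{h+1}}$ if $r$ is even. In either case $\mathcal{K}(s)$ contains at most two distinct symbols.
   Context: Let $\Sigma$ be an alphabet and $\texttt{@},\texttt{\$}$ two distinct symbols not in $\Sigma$. The run-length encoding of a non-empty string $s$ is the unique decomposition $s=a_1^{m_1}\cdots a_r^{m_r}$ with $a_i\in\Sigma$, $m_i\ge1$, $a_i\ne a_{i+1}$ ($a^m$ is $a$ repeated $m$ times). For $s$ with $|s|=n$ let $\hat s=\texttt{@}\,s\,\texttt{\$}$ (positions $1,\dots,n+2$); $\hat s[i..j)$ is the substring at positions $i,\dots,j-1$. The leading (trailing) run of a non-empty string is its longest prefix (suffix) consisting of one repeated symbol. The Flashback decomposition $\mathcal{F}(s)$ is the sequence of tokens $(\sigma,p)$ (symbol string $\sigma$, split position $p$) produced as follows, starting from active span $[lo,hi)=[1,n+3)$: if $lo\ge hi$, stop. Let $\ell$ be the leading-run length of $\hat s[lo..hi)$. If $\ell=hi-lo$, append $(\hat s[lo..hi),0)$ and stop. Otherwise let $\hat s[r'..hi)$ be the trailing run of $\hat s[lo..hi)$ and $\sigma=\hat s[lo..lo+\ell)\cdot\hat s[r'..hi)$; if $lo+\ell\ge r'$, append $(\sigma,0)$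 and stop; otherwise append $(\sigma,\ell)$ and repeat with $[lo+\ell,r')$. The symbol string of the last token is called the peeling kernel $\mathcal{K}(s)$. *)

theory Defs
  imports Main
begin

text \<open>Symbols of the augmented string: letters of the alphabet (type 'a) plus the
two fresh sentinels @ and $.\<close>
datatype 'a hsym = Sym 'a | At | Dollar

text \<open>hat s = @ s $, positions 1..n+2 (position i is list index i-1).\<close>
definition hat :: "'a list \<Rightarrow> 'a hsym list" where
  "hat s = At # map Sym s @ [Dollar]"

text \<open>Substring at positions i,...,j-1 (1-indexed).\<close>
definition sub :: "'b list \<Rightarrow> nat \<Rightarrow> nat \<Rightarrow> 'b list" where
  "sub w i j = map (\<lambda>k. w ! (k - 1)) [i..<j]"

definition lead_len :: "'b list \<Rightarrow> nat" where
  "lead_len u = length (takeWhile (\<lambda>x. x = hd u) u)"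

definition trail_len :: "'b list \<Rightarrow> nat" where
  "trail_len u = length (takeWhile (\<lambda>x. x = last u) (rev u))"

lemma lead_len_pos: "u \<noteq> [] \<Longrightarrow> 0 < lead_len u"
  by (cases u) (auto simp: lead_len_def)

lemma trail_len_pos: "u \<noteq> [] \<Longrightarrow> 0 < trail_len u"
  by (cases "rev u") (auto simp: trail_len_def last_rev[symmetric] simp del: last_rev)

function flash :: "'b list \<Rightarrow> nat \<Rightarrow> nat \<Rightarrow> ('b list \<times> nat) list" where
  "flash w lo hi =
    (if hi \<le> lo then []
     else let u = sub w lo hi; l = lead_len u in
       if l = hi - lo then [(u, 0)]
       else let r' = hi - trail_len u;
                \<sigma> = sub w lo (lo + l) @ sub w r' hi in
         if lo + l \<ge> r' then [(\<sigma>, 0)]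
         else (\<sigma>, l) # flash w (lo + l) r')"
  by pat_completeness auto
lemma flash_term_aux:
  "\<not> hi \<le> lo \<Longrightarrow> hi - (trail_len (sub w lo hi) + (lo + lead_len (sub w lo hi))) < hi - lo"
proof -
  assume a: "\<not> hi \<le> lo"
  then have "sub w lo hi \<noteq> []" by (simp add: sub_def)
  from lead_len_pos[OF this] show ?thesis using a by linarith
qed

termination
  by (relation "measure (\<lambda>(w, lo, hi). hi - lo)") (auto dest: flash_term_aux)

definition flashback :: "'a list \<Rightarrow> ('a hsym list \<times> nat) list" where
  "flashback s = flash (hat s) 1 (length s + 3)"

definition kernel :: "'a list \<Rightarrow> 'a hsym list" where
  "kernel s = fst (last (flashback s))"

definition is_rle :: "'a list \<Rightarrow> 'a list \<Rightarrow> nat list \<Rightarrow> bool" where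
  "is_rle s as ms \<longleftrightarrow> length as = length ms \<and> (\<forall>i<length ms. 1 \<le> ms ! i)
     \<and> (\<forall>i. i + 1 < length as \<longrightarrow> as ! i \<noteq> as ! (i + 1))
     \<and> s = concat (map (\<lambda>(a, m). replicate m a) (zip as ms))"

end

theory Submission
  imports Defs
begin

text \<open>Writing \<open>@s$\<close> as its list of runs, the active span of every peeling step is a
contiguous block of whole runs: its leading and trailing runs are the first and last runs of
the block, and the next span is the block with these two runs removed. Since \<open>@\<close> and \<open>$\<close>
are runs of their own, peeling stops exactly when one or two runs of \<open>s\<close> are left, namely
the middle ones.\<close>

definition decode_runs :: "('b \<times> nat) list \<Rightarrow> 'b list" where
  "decode_runs ps = concat (map (\<lambda>(a, m). replicate m a) ps)"

definition valid_runs :: "('b \<times> nat) list \<Rightarrow> bool" where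
  "valid_runs ps \<longleftrightarrow> (\<forall>p\<in>set ps. 0 < snd p) \<and> successively (\<lambda>p q. fst p \<noteq> fst q) ps"

definition middle :: "'c list \<Rightarrow> 'c list" where
  "middle xs = take (2 - length xs mod 2) (drop ((length xs - 1) div 2) xs)"

lemma decode_runs_simps [simp]:
  "decode_runs [] = []"
  "decode_runs (p # ps) = replicate (snd p) (fst p) @ decode_runs ps"
  "decode_runs (ps @ qs) = decode_runs ps @ decode_runs qs"
  by (auto simp: decode_runs_def split: prod.splits)

lemma decode_runs_rev: "decode_runs (rev ps) = rev (decode_runs ps)"
  by (induction ps) auto

lemma set_decode_runs_subset: "set (decode_runs ps) \<subseteq> fst ` set ps"
  by (induction ps) auto

lemma card_set_decode_runs_le: "card (set (decode_runs ps)) \<le> length ps"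
proof -
  have "card (set (decode_runs ps)) \<le> card (fst ` set ps)"
    by (intro card_mono finite_imageI finite_set set_decode_runs_subset)
  also have "\<dots> \<le> card (set ps)"
    by (intro card_image_le finite_set)
  also have "\<dots> \<le> length ps"
    by (rule card_length)
  finally show ?thesis .
qed

lemma valid_runs_rev [simp]: "valid_runs (rev ps) = valid_runs ps"
  unfolding valid_runs_def by (auto elim: successively_mono)

lemma valid_runs_Cons_snocD: "valid_runs (p # qs @ [q]) \<Longrightarrow> valid_runs qs"
  by (auto simp: valid_runs_def successively_Cons successively_append_iff)

lemma lead_len_decode_runs:
  assumes "valid_runs (p # ps)"
  shows "lead_len (decode_runs (p # ps)) = snd p"
proof -
  have "0 < snd p" using assms by (simp add: valid_runs_def)
  then have hd: "hd (decode_runs (p # ps)) = fst p" by (cases "snd p") auto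
  have "takeWhile (\<lambda>x. x = fst p) (decode_runs ps) = []"
  proof (cases ps)
    case (Cons q qs)
    then have "0 < snd q" "fst p \<noteq> fst q" using assms by (auto simp: valid_runs_def)
    then show ?thesis using Cons by (cases "snd q") auto
  qed simp
  then show ?thesis
    unfolding lead_len_def hd by (subst decode_runs_simps(2), subst takeWhile_append2) auto
qed

lemma trail_len_decode_runs:
  assumes "valid_runs (ps @ [q])"
  shows "trail_len (decode_runs (ps @ [q])) = snd q"
proof -
  have trail_lead: "trail_len u = lead_len (rev u)" if "u \<noteq> []" for u :: "'b list"
    using that by (simp add: trail_len_def lead_len_def hd_rev)
  have "valid_runs (q # rev ps)" using assms valid_runs_rev[of "ps @ [q]"] by simp
  then have "lead_len (rev (decode_runs (ps @ [q]))) = snd q"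
    using lead_len_decode_runs[of q "rev ps"] by (simp add: decode_runs_rev)
  moreover have "decode_runs (ps @ [q]) \<noteq> []"
    using assms by (cases "snd q") (auto simp: valid_runs_def)
  ultimately show ?thesis
    by (metis trail_lead)
qed

lemma length_sub [simp]: "length (sub w i j) = j - i"
  by (simp add: sub_def)

lemma take_sub: "n \<le> j - i \<Longrightarrow> take n (sub w i j) = sub w i (i + n)"
  by (cases "n = 0") (simp_all add: sub_def take_map)

lemma drop_sub: "drop n (sub w i j) = sub w (i + n) j"
  by (simp add: sub_def drop_map)

lemma sub_decode_runs_Cons_snoc:
  assumes "sub w lo hi = decode_runs (p # qs @ [q])"
  shows "sub w lo (lo + snd p) = replicate (snd p) (fst p)"
    and "sub w (lo + snd p) (hi - snd q) = decode_runs qs"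
    and "sub w (hi - snd q) hi = replicate (snd q) (fst q)"
    and "hi - lo = snd p + length (decode_runs qs) + snd q"
proof -
  show len: "hi - lo = snd p + length (decode_runs qs) + snd q"
    using arg_cong[OF assms, of length] by simp
  show "sub w lo (lo + snd p) = replicate (snd p) (fst p)"
    using arg_cong[OF assms, of "take (snd p)"] len by (simp add: take_sub)
  have "hi - snd q = lo + snd p + length (decode_runs qs) \<or> (snd q = 0 \<and> hi \<le> lo)"
    using len by linarith
  moreover have "sub w i j = []" if "j \<le> i" for i j
    using that by (simp add: sub_def)
  ultimately show "sub w (lo + snd p) (hi - snd q) = decode_runs qs"
    and "sub w (hi - snd q) hi = replicate (snd q) (fst q)"
    using arg_cong[OF assms, of "\<lambda>u. take (length (decode_runs qs)) (drop (snd p) u)"]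
      arg_cong[OF assms, of "drop (snd p + length (decode_runs qs))"] len
    by (auto simp: drop_sub take_sub add.assoc)
qed

declare flash.simps [simp del]

lemma flash_nonempty: "lo < hi \<Longrightarrow> flash w lo hi \<noteq> []"
  by (subst flash.simps) (simp add: Let_def)

lemma flash_single_run:
  assumes "valid_runs [p]" and "sub w lo hi = decode_runs [p]"
  shows "flash w lo hi = [(decode_runs [p], 0)]"
proof -
  have len: "hi - lo = snd p"
    using arg_cong[OF assms(2), of length] by simp
  then have "lead_len (sub w lo hi) = hi - lo"
    using assms lead_len_decode_runs[of p "[]"] by simp
  moreover have "lo < hi"
    using assms len by (simp add: valid_runs_def)
  ultimately show ?thesis
    using assms(2) by (subst flash.simps) simp
qed

lemma flash_Cons_snoc:
  assumes runs: "valid_runs (p # qs @ [q])" and span: "sub w lo hi = decode_runs (p # qs @ [q])"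
  shows "flash w lo hi = (decode_runs [p, q], if qs = [] then 0 else snd p)
                         # (if qs = [] then [] else flash w (lo + snd p) (hi - snd q))"
proof -
  note parts = sub_decode_runs_Cons_snoc[OF span]
  have pos: "0 < snd p" "0 < snd q" using runs by (auto simp: valid_runs_def)
  have lead: "lead_len (sub w lo hi) = snd p"
    using span lead_len_decode_runs[OF runs] by simp
  have trail: "trail_len (sub w lo hi) = snd q"
    using span trail_len_decode_runs[of "p # qs" q] runs by simp
  have "flash w lo hi = (if hi - snd q \<le> lo + snd p then [(decode_runs [p, q], 0)]
                         else (decode_runs [p, q], snd p) # flash w (lo + snd p) (hi - snd q))"
    using parts(1,3,4) pos lead trail by (subst flash.simps) (simp add: Let_def)
  moreover have "qs = [] \<longleftrightarrow> hi - snd q \<le> lo + snd p"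
    using parts(4) runs by (cases qs) (auto simp: valid_runs_def)
  ultimately show ?thesis
    by simp
qed

lemma middle_Cons_snoc:
  assumes "xs \<noteq> []"
  shows "middle (x # xs @ [y]) = middle xs"
proof -
  obtain m where m: "length xs = Suc m" using assms by (cases xs) auto
  have start: "(length (x # xs @ [y]) - 1) div 2 = Suc (m div 2)"
    and width: "2 - length (x # xs @ [y]) mod 2 = 2 - length xs mod 2"
    using m by simp_all
  have "take (2 - length xs mod 2) (drop (m div 2) (xs @ [y])) =
        take (2 - length xs mod 2) (drop (m div 2) xs)"
    using m by (simp add: drop_append take_append; presburger)
  then show ?thesis
    unfolding middle_def start width using m by simp
qed

lemma middle_map: "middle (map f xs) = map f (middle xs)"
  by (simp add: middle_def take_map drop_map)

lemma middle_odd: "odd (length xs) \<Longrightarrow> middle xs = [xs ! ((length xs - 1) div 2)]"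
  by (simp add: middle_def odd_iff_mod_2_eq_one Cons_nth_drop_Suc[symmetric])

lemma middle_even:
  assumes "even (length xs)" and "xs \<noteq> []"
  shows "middle xs = [xs ! ((length xs - 1) div 2), xs ! (length xs div 2)]"
proof -
  obtain j where "length xs = 2 * j" using assms(1) by (rule evenE)
  with assms(2) obtain k where k: "length xs = Suc (Suc (2 * k))" by (cases j) auto
  then have "drop k xs = xs ! k # xs ! Suc k # drop (Suc (Suc k)) xs"
    by (simp add: Cons_nth_drop_Suc)
  then show ?thesis using k by (simp add: middle_def)
qed

lemma length_middle_le: "length (middle xs) \<le> 2"
  by (simp add: middle_def)

lemma last_flash_decode_runs_middle:
  "valid_runs ps \<Longrightarrow> ps \<noteq> [] \<Longrightarrow> sub w lo hi = decode_runs ps \<Longrightarrow>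
   fst (last (flash w lo hi)) = decode_runs (middle ps)"
proof (induction "length ps" arbitrary: ps lo hi rule: less_induct)
  case less
  consider (single) p where "ps = [p]" | (outer) p qs q where "ps = p # qs @ [q]"
    using less.prems(2) by (metis neq_Nil_conv rev_exhaust)
  then show ?case
  proof cases
    case single
    then show ?thesis using less.prems flash_single_run by (fastforce simp: middle_def)
  next
    case outer
    note flash_step = flash_Cons_snoc[OF less.prems(1,3)[unfolded outer]]
    show ?thesis
    proof (cases "qs = []")
      case True
      then show ?thesis using flash_step outer by (simp add: middle_def)
    next
      case False
      note parts = sub_decode_runs_Cons_snoc[OF less.prems(3)[unfolded outer]]
      have "valid_runs qs" using less.prems(1) outer valid_runs_Cons_snocD by blast
      moreover have "0 < length (decode_runs qs)"
        using False \<open>valid_runs qs\<close> by (cases qs) (auto simp: valid_runs_def)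
      then have "flash w (lo + snd p) (hi - snd q) \<noteq> []"
        using parts(4) by (intro flash_nonempty) linarith
      ultimately show ?thesis
        using less.hyps[of qs] outer False flash_step middle_Cons_snoc[OF False] parts(2)
        by simp
    qed
  qed
qed

lemma sub_whole: "sub w 1 (Suc (length w)) = w"
proof -
  have "[1..<Suc (length w)] = map Suc [0..<length w]" by (simp add: map_Suc_upt)
  then show ?thesis by (simp add: sub_def map_nth comp_def)
qed

lemma decode_runs_map_fst: "decode_runs (map (\<lambda>(a, m). (g a, m)) ps) = map g (decode_runs ps)"
  by (induction ps) auto

lemma kernel_eq_decode_runs_middle:
  assumes "s \<noteq> []" and "is_rle s as ms"
  shows "kernel s = decode_runs (map (\<lambda>(a, m). (Sym a, m)) (middle (zip as ms)))"
proof -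
  define runs where "runs = map (\<lambda>(a, m). (Sym a, m)) (zip as ms)"
  have s: "s = decode_runs (zip as ms)"
    using assms(2) by (simp add: is_rle_def decode_runs_def)
  have "runs \<noteq> []" using assms(1) s by (auto simp: runs_def)
  have "decode_runs runs = map Sym s"
    unfolding runs_def s by (rule decode_runs_map_fst)
  then have span: "sub (hat s) 1 (length s + 3) = decode_runs ((At, 1) # runs @ [(Dollar, 1)])"
    using sub_whole[of "hat s"] by (simp add: hat_def numeral_3_eq_3)
  have "\<forall>p\<in>set runs. 0 < snd p"
    using assms(2) by (auto simp: runs_def is_rle_def set_zip)
  moreover have "successively (\<lambda>p q. fst p \<noteq> fst q) runs"
    using assms(2) by (auto simp: runs_def is_rle_def successively_conv_nth)
  moreover have "fst (hd runs) \<noteq> At" "fst (last runs) \<noteq> Dollar"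
    using hd_in_set[OF \<open>runs \<noteq> []\<close>] last_in_set[OF \<open>runs \<noteq> []\<close>] by (auto simp: runs_def)
  ultimately have "valid_runs ((At, 1) # runs @ [(Dollar, 1)])"
    using \<open>runs \<noteq> []\<close>
    by (auto simp: valid_runs_def successively_append_iff successively_Cons)
  then show ?thesis
    using last_flash_decode_runs_middle[OF _ _ span] middle_Cons_snoc[OF \<open>runs \<noteq> []\<close>]
    by (simp add: kernel_def flashback_def runs_def middle_map)
qed

theorem corollary6p7:
  fixes s as :: "'a list" and ms :: "nat list"
  assumes "s \<noteq> []"
    and "is_rle s as ms"
  defines "r \<equiv> length as"
  defines "h \<equiv> (r + 1) div 2"
  shows "(odd r \<longrightarrow> kernel s = replicate (ms ! (h - 1)) (Sym (as ! (h - 1))))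
       \<and> (even r \<longrightarrow> kernel s = replicate (ms ! (h - 1)) (Sym (as ! (h - 1)))
                              @ replicate (ms ! h) (Sym (as ! h)))
       \<and> card (set (kernel s)) \<le> 2"
proof -
  note kernel = kernel_eq_decode_runs_middle[OF assms(1,2)]
  have len: "length as = r" "length ms = r" and "r \<noteq> 0"
    using assms(1,2) by (auto simp: is_rle_def r_def)
  then have "as \<noteq> []" "ms \<noteq> []"
    by auto
  have idx: "(r - 1) div 2 = h - 1" "h - 1 < r" "even r \<Longrightarrow> r div 2 = h" "even r \<Longrightarrow> h < r"
    using \<open>r \<noteq> 0\<close> by (auto simp: h_def elim!: oddE evenE)
  have "odd r \<longrightarrow> kernel s = replicate (ms ! (h - 1)) (Sym (as ! (h - 1)))"
    using kernel middle_odd[of "zip as ms"] idx len by simp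
  moreover have "even r \<longrightarrow> kernel s = replicate (ms ! (h - 1)) (Sym (as ! (h - 1)))
                                         @ replicate (ms ! h) (Sym (as ! h))"
    using kernel middle_even[of "zip as ms"] idx len \<open>as \<noteq> []\<close> \<open>ms \<noteq> []\<close> by simp
  moreover have "card (set (kernel s)) \<le> 2"
    using kernel card_set_decode_runs_le length_middle_le by (metis length_map order_trans)
  ultimately show ?thesis by blast
qed

end
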